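(* There is an absolute constant $c>0$ such that, for every $n\ge 2$, there exists an $n\times n$ $(0,1)$-matrix $A$ with the following property. Every depth-$2$ circuit computing $f_A(\vec x)=A\vec x$ over $GF(2)$ in which every middle node computes a linear boolean function has at least $c\,n^2/\log n$ wires. The output nodes of such a circuit may compute arbitrary boolean functions.
   Context: A depth-$2$ circuit has $n$ input nodes $x_1,\dots,x_n$, a set of middle nodes, and $n$ output nodes $y_1,\dots,y_n$. Wires go only from inputs to middle nodes, from middle nodes to outputs, or from inputs directly to outputs. Each non-input node may compute an arbitrary boolean function of the values at its in-neighbours, with no restriction on fanin or fanout. The circuit computes $f=(f_1,\dots,f_n)$ if the function at $y_i$ equals $f_i$ for all $i$. A boolean function is linear if it is the sum modulo $2$ of some subset of its arguments (the empty sum is allowed) or the negation of such a sum. The number of wires is the number of edges of the circuit. *)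

theory Defs
  imports Main Complex_Main
begin

text \<open>A depth-2 circuit with inputs x_0..x_{n-1} (indices < n), middle nodes
  indexed by 0..<mid, and outputs y_0..y_{n-1} (indices < n).
  inmid i j: wire from input i to middle node j;
  midout j k: wire from middle node j to output k;
  inout i k: wire from input i directly to output k;
  midfun j x: value of middle node j on input assignment x;
  outfun k x v: value of output k given input assignment x and middle values v.\<close>

record d2circ =
  mid    :: nat
  inmid  :: "nat \<Rightarrow> nat \<Rightarrow> bool"
  midout :: "nat \<Rightarrow> nat \<Rightarrow> bool"
  inout  :: "nat \<Rightarrow> nat \<Rightarrow> bool"
  midfun :: "nat \<Rightarrow> (nat \<Rightarrow> bool) \<Rightarrow> bool"
  outfun :: "nat \<Rightarrow> (nat \<Rightarrow> bool) \<Rightarrow> (nat \<Rightarrow> bool) \<Rightarrow> bool"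

definition parity :: "nat set \<Rightarrow> (nat \<Rightarrow> bool) \<Rightarrow> bool" where
  "parity S x = odd (card {i \<in> S. x i})"

definition linear_middle :: "nat \<Rightarrow> d2circ \<Rightarrow> bool" where
  "linear_middle n C \<longleftrightarrow>
     (\<forall>j < mid C. \<exists>S b. S \<subseteq> {i. i < n \<and> inmid C i j} \<and>
        (\<forall>x. midfun C j x = (b \<noteq> parity S x)))"

text \<open>Each output computes an arbitrary function of the values at its in-neighbours.\<close>
definition outputs_local :: "nat \<Rightarrow> d2circ \<Rightarrow> bool" where
  "outputs_local n C \<longleftrightarrow>
     (\<forall>k < n. \<forall>x x' v v'.
        (\<forall>i < n. inout C i k \<longrightarrow> x i = x' i) \<longrightarrow>
        (\<forall>j < mid C. midout C j k \<longrightarrow> v j = v' j) \<longrightarrow>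
        outfun C k x v = outfun C k x' v')"

definition matvec :: "nat \<Rightarrow> (nat \<Rightarrow> nat \<Rightarrow> bool) \<Rightarrow> (nat \<Rightarrow> bool) \<Rightarrow> nat \<Rightarrow> bool" where
  "matvec n A x k = parity {i. i < n \<and> A k i} x"

definition computes :: "nat \<Rightarrow> d2circ \<Rightarrow> (nat \<Rightarrow> nat \<Rightarrow> bool) \<Rightarrow> bool" where
  "computes n C A \<longleftrightarrow> outputs_local n C \<and>
     (\<forall>x. \<forall>k < n. outfun C k x (\<lambda>j. midfun C j x) = matvec n A x k)"

definition wires :: "nat \<Rightarrow> d2circ \<Rightarrow> nat" where
  "wires n C = card {(i, j). i < n \<and> j < mid C \<and> inmid C i j}
             + card {(j, k). j < mid C \<and> k < n \<and> midout C j k}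
             + card {(i, k). i < n \<and> k < n \<and> inout C i k}"

end

theory Submission
  imports Defs "HOL-Library.FuncSet"
begin

(* 1. Linear algebra over GF(2) on sets of indices: a finite set R that is not a GF(2)-sum of
      the sets v m (m \<in> I) is separated from them by an assignment x annihilating every v m
      but not R (separating_assignment).
   2. Output k sees only its direct inputs and its middle nodes, and these are constant on their
      common annihilator; so row k of A is a GF(2)-sum of the unit vectors of its direct inputs
      and the supports of its middle nodes (row_in_span).  Hence A^T = L + P Q over GF(2) with
      card P + card Q + card L \<le> wires (circuit_factorization).
   3. After renaming the middle nodes into {..<n^2}, the triple (P, Q, L) becomes a set of at
      most "wires" tagged triples in {..<3} \<times> {..<n^2} \<times> {..<n^2} from which the rows of A are
      decoded (circuit_code).
   4. There are fewer than 2^(n^2) such sets of size \<le> n^2 / (8 log n), so some matrix has no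
      such code (undecodable_rows_exist), and every circuit for it has more wires
      (hard_matrix_exists); theorem3 follows with c = 1/8. *)

lemma odd_card_sym_diff:
  assumes "finite A" "finite B"
  shows "odd (card (sym_diff A B)) \<longleftrightarrow> odd (card A) \<noteq> odd (card B)"
proof -
  have "card A + card B = card (A \<union> B) + card (A \<inter> B)"
    using card_Un_Int assms by blast
  moreover have "card (A \<union> B) = card (sym_diff A B) + card (A \<inter> B)"
  proof -
    have "A \<union> B = sym_diff A B \<union> (A \<inter> B)" by auto
    moreover have "sym_diff A B \<inter> (A \<inter> B) = {}" by auto
    ultimately show ?thesis using assms by (simp add: card_Un_disjoint)
  qed
  ultimately show ?thesis by presburger
qed

lemma parity_xor:
  assumes "finite S"
  shows "parity S (\<lambda>i. x i \<noteq> y i) \<longleftrightarrow> parity S x \<noteq> parity S y"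
proof -
  have "{i\<in>S. x i \<noteq> y i} = sym_diff {i\<in>S. x i} {i\<in>S. y i}" by auto
  then show ?thesis unfolding parity_def using odd_card_sym_diff[of "{i\<in>S. x i}" "{i\<in>S. y i}"] assms by simp
qed

lemma parity_sym_diff:
  assumes "finite S" "finite T"
  shows "parity (sym_diff S T) x \<longleftrightarrow> parity S x \<noteq> parity T x"
proof -
  have "{i\<in>sym_diff S T. x i} = sym_diff {i\<in>S. x i} {i\<in>T. x i}" by auto
  then show ?thesis unfolding parity_def using odd_card_sym_diff[of "{i\<in>S. x i}" "{i\<in>T. x i}"] assms by simp
qed

lemma parity_singleton: "parity {i} x \<longleftrightarrow> x i"
proof -
  have "{j\<in>{i}. x j} = (if x i then {i} else {})" by auto
  then show ?thesis unfolding parity_def by simp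
qed

definition gf2_sum :: "('b \<Rightarrow> nat set) \<Rightarrow> 'b set \<Rightarrow> nat set" where
  "gf2_sum v M = {i. odd (card {t\<in>M. i \<in> v t})}"

lemma gf2_sum_insert:
  assumes "finite M" "t \<notin> M"
  shows "gf2_sum v (insert t M) = sym_diff (gf2_sum v M) (v t)"
proof -
  have "card {s\<in>insert t M. i \<in> v s} = card {s\<in>M. i \<in> v s} + (if i \<in> v t then 1 else 0)" for i
  proof -
    have "{s\<in>insert t M. i \<in> v s} = (if i \<in> v t then insert t {s\<in>M. i \<in> v s} else {s\<in>M. i \<in> v s})"
      by auto
    then show ?thesis using assms by simp
  qed
  then show ?thesis unfolding gf2_sum_def by auto
qed

(* By induction on I: for the new vector v t,
   combine separating assignments for R and for R + v t. *)
lemma separating_assignment: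
  assumes "finite I" "\<forall>m\<in>I. finite (v m)" "finite R" "\<forall>M\<subseteq>I. R \<noteq> gf2_sum v M"
  shows "\<exists>x. (\<forall>m\<in>I. \<not> parity (v m) x) \<and> parity R x"
  using assms
proof (induction I arbitrary: R rule: finite_induct)
  case empty
  then obtain i where "i \<in> R" unfolding gf2_sum_def by auto
  then have "{j\<in>R. j = i} = {i}" by auto
  then have "parity R (\<lambda>j. j = i)" unfolding parity_def by simp
  then show ?case by auto
next
  case (insert t I)
  have fin_t: "finite (v t)" and fin_I: "\<forall>m\<in>I. finite (v m)" using insert.prems by auto
  have fin_R': "finite (sym_diff R (v t))" using fin_t insert.prems by auto
  have R_out: "\<forall>M\<subseteq>I. R \<noteq> gf2_sum v M" using insert.prems by auto
  have R'_out: "\<forall>M\<subseteq>I. sym_diff R (v t) \<noteq> gf2_sum v M"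
  proof (intro allI impI notI)
    fix M assume M: "M \<subseteq> I" and eq: "sym_diff R (v t) = gf2_sum v M"
    have "finite M" "t \<notin> M" using M insert.hyps finite_subset by auto
    then have "gf2_sum v (insert t M) = R" using gf2_sum_insert[of M t v] eq by auto
    then show False using M insert.prems by blast
  qed
  obtain x1 where x1: "\<forall>m\<in>I. \<not> parity (v m) x1" "parity R x1"
    using insert.IH[OF fin_I insert.prems(2) R_out] by blast
  obtain x2 where x2: "\<forall>m\<in>I. \<not> parity (v m) x2" "parity (sym_diff R (v t)) x2"
    using insert.IH[OF fin_I fin_R' R'_out] by blast
  have x2_R: "parity R x2 \<longleftrightarrow> \<not> parity (v t) x2"
    using x2(2) parity_sym_diff[OF insert.prems(2) fin_t] by simp
  consider "\<not> parity (v t) x1" | "\<not> parity (v t) x2" | "parity (v t) x1" "parity (v t) x2" by blast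
  then show ?case
  proof cases
    case 1 then show ?thesis using x1 by auto
  next
    case 2 then show ?thesis using x2 x2_R by auto
  next
    case 3
    have "\<forall>m\<in>insert t I. \<not> parity (v m) (\<lambda>i. x1 i \<noteq> x2 i)"
      using parity_xor insert.prems(1) x1 x2 3 by auto
    moreover have "parity R (\<lambda>i. x1 i \<noteq> x2 i)"
      using parity_xor[OF insert.prems(2)] x1 x2_R 3 by simp
    ultimately show ?thesis by blast
  qed
qed

lemma linear_middle_supports:
  assumes "linear_middle n C"
  obtains S b where "\<forall>j<mid C. S j \<subseteq> {i. i < n \<and> inmid C i j}"
    and "\<forall>j<mid C. \<forall>x. midfun C j x = (b j \<noteq> parity (S j) x)"
proof -
  have "\<forall>j. \<exists>Sb. j < mid C \<longrightarrow> fst Sb \<subseteq> {i. i < n \<and> inmid C i j} \<and>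
                 (\<forall>x. midfun C j x = (snd Sb \<noteq> parity (fst Sb) x))"
    using assms unfolding linear_middle_def by fastforce
  then obtain Sb where "\<forall>j<mid C. fst (Sb j) \<subseteq> {i. i < n \<and> inmid C i j} \<and>
                 (\<forall>x. midfun C j x = (snd (Sb j) \<noteq> parity (fst (Sb j)) x))"
    by metis
  then show thesis by (intro that[of "fst \<circ> Sb" "snd \<circ> Sb"]) auto
qed

(* The vector of a node feeding an output: Inl i is the unit vector of input i,
   Inr j is the support of middle node j. *)
abbreviation node_vector :: "(nat \<Rightarrow> nat set) \<Rightarrow> nat + nat \<Rightarrow> nat set" where
  "node_vector S \<equiv> case_sum (\<lambda>i. {i}) S"

(* Otherwise a separating assignment x makes all these in-neighbours take the same values as on
   the all-false assignment, so output k agrees on both, whereas row k has parity 1 on x. *)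
lemma row_in_span:
  assumes comp: "computes n C A" and k: "k < n"
    and supp: "\<forall>j<mid C. S j \<subseteq> {..<n}"
    and lin: "\<forall>j<mid C. \<forall>x. midfun C j x = (b j \<noteq> parity (S j) x)"
  shows "\<exists>M \<subseteq> Inl ` {i. i < n \<and> inout C i k} \<union> Inr ` {j. j < mid C \<and> midout C j k}.
           {i. i < n \<and> A k i} = gf2_sum (node_vector S) M"
proof (rule ccontr)
  define I where "I = Inl ` {i. i < n \<and> inout C i k} \<union> Inr ` {j. j < mid C \<and> midout C j k}"
  assume "\<not> ?thesis"
  then have "\<forall>M\<subseteq>I. {i. i < n \<and> A k i} \<noteq> gf2_sum (node_vector S) M" unfolding I_def by blast
  moreover have "finite I" "\<forall>t\<in>I. finite (node_vector S t)"
    using supp finite_subset unfolding I_def by fastforce+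
  ultimately obtain x where x: "\<forall>t\<in>I. \<not> parity (node_vector S t) x" "parity {i. i < n \<and> A k i} x"
    using separating_assignment[of I "node_vector S" "{i. i < n \<and> A k i}"] by auto
  define zero where "zero = (\<lambda>_::nat. False)"
  have parity_zero: "\<not> parity T zero" for T unfolding parity_def zero_def by simp
  have "outfun C k x (\<lambda>j. midfun C j x) = outfun C k zero (\<lambda>j. midfun C j zero)"
  proof (rule comp[unfolded computes_def outputs_local_def, THEN conjunct1, rule_format, OF k])
    fix i assume "i < n" "inout C i k"
    then have "Inl i \<in> I" unfolding I_def by blast
    then have "\<not> parity {i} x" using x(1) by fastforce
    then show "x i = zero i" unfolding parity_singleton zero_def by simp
  next
    fix j assume "j < mid C" "midout C j k"
    then have "Inr j \<in> I" unfolding I_def by blast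
    then have "\<not> parity (S j) x" using x(1) by fastforce
    then show "midfun C j x = midfun C j zero" using lin parity_zero \<open>j < mid C\<close> by simp
  qed
  moreover have "\<forall>x. outfun C k x (\<lambda>j. midfun C j x) = matvec n A x k"
    using comp k unfolding computes_def by blast
  ultimately show False using x(2) parity_zero unfolding matvec_def by metis
qed

(* Row k of the GF(2) matrix (L + P Q)^T, for relations P (inputs to middle nodes),
   Q (middle nodes to outputs) and L (inputs to outputs). *)
definition factor_row :: "nat \<Rightarrow> (nat \<times> 'm) set \<Rightarrow> ('m \<times> nat) set \<Rightarrow> (nat \<times> nat) set \<Rightarrow> nat \<Rightarrow> nat set" where
  "factor_row n P Q L k =
     {i. i < n \<and> odd ((if (i, k) \<in> L then 1 else 0) + card {j. (i, j) \<in> P \<and> (j, k) \<in> Q})}"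

lemma count_node_vectors:
  assumes "finite M"
  shows "card {t\<in>M. i \<in> node_vector S t} = (if Inl i \<in> M then 1 else 0) + card {j. Inr j \<in> M \<and> i \<in> S j}"
proof -
  have split: "{t\<in>M. i \<in> node_vector S t} = (if Inl i \<in> M then {Inl i} else {}) \<union> Inr ` {j. Inr j \<in> M \<and> i \<in> S j}"
  proof (rule set_eqI)
    fix t show "t \<in> {t\<in>M. i \<in> node_vector S t} \<longleftrightarrow>
        t \<in> (if Inl i \<in> M then {Inl i} else {}) \<union> Inr ` {j. Inr j \<in> M \<and> i \<in> S j}"
      by (cases t) auto
  qed
  have "finite {j. Inr j \<in> M \<and> i \<in> S j}"
    using finite_vimageI[OF assms, of Inr] by (rule rev_finite_subset) auto
  then show ?thesis unfolding split by (auto simp: card_image card_insert_if)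
qed

(* A circuit with linear middle nodes yields a factorization A^T = L + P Q over GF(2)
   whose relations are sub-relations of the wires: P of the input-middle wires (middle supports),
   Q and L of the wires into the outputs (the terms chosen by row_in_span). *)
lemma circuit_factorization:
  assumes lm: "linear_middle n C" and comp: "computes n C A"
  shows "\<exists>(P :: (nat \<times> nat) set) Q L. P \<subseteq> {..<n} \<times> UNIV \<and> Q \<subseteq> UNIV \<times> {..<n} \<and> L \<subseteq> {..<n} \<times> {..<n} \<and>
           finite P \<and> finite Q \<and> card P + card Q + card L \<le> wires n C \<and>
           (\<forall>k<n. {i. i < n \<and> A k i} = factor_row n P Q L k)"
proof -
  obtain S b where supp: "\<forall>j<mid C. S j \<subseteq> {i. i < n \<and> inmid C i j}"
    and lin: "\<forall>j<mid C. \<forall>x. midfun C j x = (b j \<noteq> parity (S j) x)"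
    using linear_middle_supports[OF lm] by blast
  have supp_n: "\<forall>j<mid C. S j \<subseteq> {..<n}" using supp by auto
  define I where "I k = Inl ` {i. i < n \<and> inout C i k} \<union> Inr ` {j. j < mid C \<and> midout C j k}" for k
  define Mf where "Mf k = (SOME M. M \<subseteq> I k \<and> {i. i < n \<and> A k i} = gf2_sum (node_vector S) M)" for k
  have Mf: "Mf k \<subseteq> I k \<and> {i. i < n \<and> A k i} = gf2_sum (node_vector S) (Mf k)" if k: "k < n" for k
    unfolding Mf_def I_def by (rule someI_ex) (rule row_in_span[OF comp k supp_n lin])
  define E1 where "E1 = {(i, j). i < n \<and> j < mid C \<and> inmid C i j}"
  define E2 where "E2 = {(j, k). j < mid C \<and> k < n \<and> midout C j k}"
  define E3 where "E3 = {(i, k). i < n \<and> k < n \<and> inout C i k}"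
  have E_bounded: "E1 \<subseteq> {..<n} \<times> {..<mid C}" "E2 \<subseteq> {..<mid C} \<times> {..<n}" "E3 \<subseteq> {..<n} \<times> {..<n}"
    unfolding E1_def E2_def E3_def by auto
  then have fin: "finite E1" "finite E2" "finite E3"
    using finite_subset by (metis finite_SigmaI finite_lessThan)+
  define P where "P = {(i, j). j < mid C \<and> i \<in> S j}"
  define Q where "Q = {(j, k). k < n \<and> Inr j \<in> Mf k}"
  define L where "L = {(i, k). k < n \<and> Inl i \<in> Mf k}"
  have sub: "P \<subseteq> E1" "Q \<subseteq> E2" "L \<subseteq> E3"
    using supp Mf unfolding P_def Q_def L_def E1_def E2_def E3_def I_def by auto
  have "card P + card Q + card L \<le> card E1 + card E2 + card E3"
    using sub fin by (intro add_le_mono card_mono)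
  also have "\<dots> = wires n C" unfolding wires_def E1_def E2_def E3_def by simp
  finally have card_PQL: "card P + card Q + card L \<le> wires n C" .
  have rows: "{i. i < n \<and> A k i} = factor_row n P Q L k" if k: "k < n" for k
  proof -
    have "finite (I k)" unfolding I_def by simp
    then have fin_M: "finite (Mf k)" using Mf[OF k] by (auto intro: rev_finite_subset)
    have "{j. (i, j) \<in> P \<and> (j, k) \<in> Q} = {j. Inr j \<in> Mf k \<and> i \<in> S j}" for i
      using Mf[OF k] k unfolding P_def Q_def I_def by auto
    then show ?thesis
      using Mf[OF k] k count_node_vectors[OF fin_M] unfolding factor_row_def gf2_sum_def L_def by auto
  qed
  have "P \<subseteq> {..<n} \<times> UNIV" "Q \<subseteq> UNIV \<times> {..<n}" "L \<subseteq> {..<n} \<times> {..<n}"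
    using sub E_bounded by auto
  moreover have "finite P" "finite Q" using sub fin by (auto intro: rev_finite_subset)
  ultimately show ?thesis using rows card_PQL by (intro exI[of _ P] exI[of _ Q] exI[of _ L]) simp
qed

lemma factor_row_relabel:
  fixes P :: "(nat \<times> 'm) set" and Q :: "('m \<times> nat) set"
  assumes "finite P" "finite Q" "card P + card Q \<le> N"
  shows "\<exists>P' Q'. P' \<subseteq> fst ` P \<times> {..<N} \<and> Q' \<subseteq> {..<N} \<times> snd ` Q \<and>
           card P' \<le> card P \<and> card Q' \<le> card Q \<and> (\<forall>k. factor_row n P' Q' L k = factor_row n P Q L k)"
proof -
  define J where "J = snd ` P \<union> fst ` Q"
  have "finite J" unfolding J_def using assms by simp
  then obtain h where h: "bij_betw h J {0..<card J}" using ex_bij_betw_finite_nat by blast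
  have "card J \<le> card (snd ` P) + card (fst ` Q)" unfolding J_def by (rule card_Un_le)
  also have "\<dots> \<le> N" using assms card_image_le[of P snd] card_image_le[of Q fst] by linarith
  finally have card_J: "card J \<le> N" .
  have h_range: "h j < N" if "j \<in> J" for j
    using bij_betw_apply[OF h that] card_J by simp
  have h_inj: "inj_on h J" using h by (rule bij_betw_imp_inj_on)
  define P' where "P' = map_prod id h ` P"
  define Q' where "Q' = map_prod h id ` Q"
  have "P' \<subseteq> fst ` P \<times> {..<N}" "Q' \<subseteq> {..<N} \<times> snd ` Q"
    using h_range unfolding P'_def Q'_def J_def by force+
  moreover have "card P' \<le> card P" "card Q' \<le> card Q"
    unfolding P'_def Q'_def using assms by (auto intro: card_image_le)
  moreover have "factor_row n P' Q' L k = factor_row n P Q L k" for k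
  proof -
    have "{j. (i, j) \<in> P' \<and> (j, k) \<in> Q'} = h ` {j. (i, j) \<in> P \<and> (j, k) \<in> Q}" for i
    proof (intro equalityI subsetI)
      fix x assume "x \<in> {j. (i, j) \<in> P' \<and> (j, k) \<in> Q'}"
      then obtain j1 j2 where j: "(i, j1) \<in> P" "(j2, k) \<in> Q" "x = h j1" "x = h j2"
        unfolding P'_def Q'_def by auto
      then have "j1 \<in> J" "j2 \<in> J" unfolding J_def by force+
      then have "j1 = j2" using inj_onD[OF h_inj] j(3,4) by metis
      then show "x \<in> h ` {j. (i, j) \<in> P \<and> (j, k) \<in> Q}" using j by blast
    qed (force simp: P'_def Q'_def)
    moreover have "inj_on h {j. (i, j) \<in> P \<and> (j, k) \<in> Q}" for i
      using h_inj by (rule inj_on_subset) (force simp: J_def)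
    ultimately show ?thesis unfolding factor_row_def by (simp add: card_image)
  qed
  ultimately show ?thesis by (intro exI[of _ P'] exI[of _ Q']) simp
qed

definition decode :: "nat \<Rightarrow> (nat \<times> nat \<times> nat) set \<Rightarrow> nat \<Rightarrow> nat set" where
  "decode n X = restrict (factor_row n {(i, j). (0, i, j) \<in> X} {(j, k). (1, j, k) \<in> X} {(i, k). (2, i, k) \<in> X}) {..<n}"

definition matrix_rows :: "nat \<Rightarrow> (nat \<Rightarrow> nat \<Rightarrow> bool) \<Rightarrow> nat \<Rightarrow> nat set" where
  "matrix_rows n A = restrict (\<lambda>k. {i. i < n \<and> A k i}) {..<n}"

lemma tagged_encoding:
  fixes P Q L :: "(nat \<times> nat) set"
  assumes "P \<subseteq> {..<N} \<times> {..<N}" "Q \<subseteq> {..<N} \<times> {..<N}" "L \<subseteq> {..<N} \<times> {..<N}"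
  shows "\<exists>X \<subseteq> {..<3} \<times> {..<N} \<times> {..<N}. card X \<le> card P + card Q + card L \<and>
           decode n X = restrict (factor_row n P Q L) {..<n}"
proof -
  define X where "X = (\<lambda>(i, j). (0, i, j)) ` P \<union> (\<lambda>(j, k). (1, j, k)) ` Q \<union> (\<lambda>(i, k). (2::nat, i, k)) ` L"
  have "X \<subseteq> {..<3} \<times> {..<N} \<times> {..<N}" using assms unfolding X_def by auto
  moreover have "finite P" "finite Q" "finite L" using assms finite_subset by blast+
  then have "card X \<le> card P + card Q + card L"
    unfolding X_def by (meson add_le_mono card_Un_le card_image_le order_trans)
  moreover have "{(i, j). (0, i, j) \<in> X} = P" "{(j, k). (1, j, k) \<in> X} = Q" "{(i, k). (2, i, k) \<in> X} = L"
    unfolding X_def by auto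
  ultimately show ?thesis unfolding decode_def by auto
qed

lemma circuit_code:
  assumes "linear_middle n C" "computes n C A" "n \<le> N" "wires n C \<le> N"
  shows "\<exists>X \<subseteq> {..<3} \<times> {..<N} \<times> {..<N}. card X \<le> wires n C \<and> decode n X = matrix_rows n A"
proof -
  obtain P Q L :: "(nat \<times> nat) set" where PQL: "P \<subseteq> {..<n} \<times> UNIV" "Q \<subseteq> UNIV \<times> {..<n}" "L \<subseteq> {..<n} \<times> {..<n}"
      "finite P" "finite Q" "card P + card Q + card L \<le> wires n C"
      and rows: "\<forall>k<n. {i. i < n \<and> A k i} = factor_row n P Q L k"
    using circuit_factorization[OF assms(1,2)] by blast
  obtain P' Q' where P'Q': "P' \<subseteq> fst ` P \<times> {..<N}" "Q' \<subseteq> {..<N} \<times> snd ` Q"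
      "card P' \<le> card P" "card Q' \<le> card Q" "\<forall>k. factor_row n P' Q' L k = factor_row n P Q L k"
    using factor_row_relabel[OF PQL(4,5), of N n L] PQL(6) assms(4) by auto
  have "fst ` P \<subseteq> {..<N}" "snd ` Q \<subseteq> {..<N}" using PQL(1,2) assms(3) by auto
  then have "P' \<subseteq> {..<N} \<times> {..<N}" "Q' \<subseteq> {..<N} \<times> {..<N}"
    using P'Q'(1,2) by (meson Sigma_mono order_refl order_trans)+
  moreover have "L \<subseteq> {..<N} \<times> {..<N}" using PQL(3) assms(3) by auto
  ultimately obtain X where X: "X \<subseteq> {..<3} \<times> {..<N} \<times> {..<N}"
      "card X \<le> card P' + card Q' + card L" "decode n X = restrict (factor_row n P' Q' L) {..<n}"
    using tagged_encoding[of P' N Q' L n] by blast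
  have "restrict (factor_row n P' Q' L) {..<n} = matrix_rows n A"
    using rows P'Q'(5) unfolding matrix_rows_def by (intro restrict_ext) auto
  then show ?thesis using X P'Q'(3,4) PQL(6) by (intro exI[of _ X]) auto
qed

lemma card_small_subsets:
  assumes "finite U" "card U \<ge> 1"
  shows "card {X. X \<subseteq> U \<and> card X \<le> K} \<le> (K + 1) * card U ^ K"
proof -
  have "{X. X \<subseteq> U \<and> card X \<le> K} = (\<Union>k\<in>{..K}. {X. X \<subseteq> U \<and> card X = k})" by auto
  then have "card {X. X \<subseteq> U \<and> card X \<le> K} \<le> (\<Sum>k\<in>{..K}. card {X. X \<subseteq> U \<and> card X = k})"
    by (simp add: card_UN_le)
  also have "\<dots> = (\<Sum>k\<in>{..K}. card U choose k)" using n_subsets[OF assms(1)] by simp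
  also have "\<dots> \<le> (\<Sum>k\<in>{..K}. card U ^ K)"
  proof (rule sum_mono)
    fix k assume k: "k \<in> {..K}"
    have "card U choose k \<le> card U ^ k"
      by (cases "k \<le> card U") (auto simp: binomial_le_pow binomial_eq_0)
    also have "\<dots> \<le> card U ^ K" using k assms(2) by (intro power_increasing) auto
    finally show "card U choose k \<le> card U ^ K" .
  qed
  also have "\<dots> = (K + 1) * card U ^ K" by simp
  finally show ?thesis .
qed

(* For K \<le> n^2 / (8 log n): (K + 1) (3 n^4)^K \<le> n^(7K) = 2^(7K log n) < 2^(n^2). *)
lemma counting_inequality:
  fixes n K :: nat
  assumes n: "2 \<le> n" and K: "real K \<le> real n ^ 2 / (8 * log 2 (real n))"
  shows "(K + 1) * (3 * (n * n) * (n * n)) ^ K < 2 ^ (n * n)"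
proof -
  have log_n: "1 \<le> log 2 (real n)" using n by simp
  have "K + 1 \<le> 2 ^ K" by (induction K) auto
  also have "(2::nat) ^ K \<le> n ^ K" using n by (intro power_mono) auto
  finally have "K + 1 \<le> n ^ K" .
  moreover have "(3 * (n * n) * (n * n)) ^ K \<le> (n ^ 6) ^ K"
  proof (rule power_mono)
    have "3 \<le> n * n" using n mult_le_mono[OF n n] by simp
    then have "3 * (n * n) * (n * n) \<le> (n * n) * (n * n) * (n * n)" by (intro mult_le_mono1)
    also have "\<dots> = n ^ 6" by (simp add: eval_nat_numeral)
    finally show "3 * (n * n) * (n * n) \<le> n ^ 6" .
  qed simp
  ultimately have "(K + 1) * (3 * (n * n) * (n * n)) ^ K \<le> n ^ (7 * K)"
    using mult_le_mono by (fastforce simp: power_mult[symmetric] power_add[symmetric])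
  moreover have "real (n ^ (7 * K)) < real (2 ^ (n * n))"
  proof -
    have "7 * (real K * log 2 (real n)) \<le> 7 / 8 * real n ^ 2"
      using K log_n by (simp add: field_simps)
    also have "\<dots> < real (n * n)" using n by (simp add: power2_eq_square)
    finally have "log 2 (real n) * real (7 * K) < real (n * n)" by (simp add: algebra_simps)
    then have "2 powr (log 2 (real n) * real (7 * K)) < 2 powr real (n * n)" by simp
    then show ?thesis using n by (simp add: powr_powr[symmetric] powr_realpow power_mult)
  qed
  ultimately show ?thesis by linarith
qed

(* Pigeonhole: the codes of size \<le> K are fewer than the 2^(n^2) families of rows. *)
lemma undecodable_rows_exist:
  assumes n: "2 \<le> n" and K: "real K \<le> real n ^ 2 / (8 * log 2 (real n))"
  shows "\<exists>R \<in> PiE {..<n} (\<lambda>_. Pow {..<n}).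
           \<forall>X \<subseteq> {..<3} \<times> {..<n * n} \<times> {..<n * n}. card X \<le> K \<longrightarrow> decode n X \<noteq> R"
proof -
  define U where "U = {..<3::nat} \<times> {..<n * n} \<times> {..<n * n}"
  define T where "T = {X. X \<subseteq> U \<and> card X \<le> K}"
  define Rows where "Rows = PiE {..<n} (\<lambda>_. Pow {..<n})"
  have fin_U: "finite U" and card_U: "card U = 3 * (n * n) * (n * n)"
    unfolding U_def by (simp_all add: card_cartesian_product)
  have fin_T: "finite T" unfolding T_def using fin_U by simp
  have "card (decode n ` T) \<le> card T" using fin_T by (rule card_image_le)
  also have "\<dots> \<le> (K + 1) * card U ^ K"
    unfolding T_def using fin_U card_U n by (intro card_small_subsets) auto
  also have "\<dots> < card Rows"
    unfolding card_U Rows_def using counting_inequality[OF n K] by (simp add: card_PiE card_Pow power_mult)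
  finally have "\<not> Rows \<subseteq> decode n ` T"
    using card_mono[OF finite_imageI[OF fin_T]] by (meson leD)
  then obtain R where R: "R \<in> Rows" "R \<notin> decode n ` T" by blast
  show ?thesis
  proof (intro bexI[of _ R] allI impI)
    fix X assume "X \<subseteq> {..<3::nat} \<times> {..<n * n} \<times> {..<n * n}" "card X \<le> K"
    then have "X \<in> T" unfolding T_def U_def by simp
    then show "decode n X \<noteq> R" using R(2) by blast
  qed (use R(1) Rows_def in simp)
qed

lemma hard_matrix_exists:
  assumes n: "2 \<le> n" and K: "real K \<le> real n ^ 2 / (8 * log 2 (real n))"
  shows "\<exists>A. \<forall>C. linear_middle n C \<and> computes n C A \<longrightarrow> K < wires n C"
proof -
  obtain R where R: "R \<in> PiE {..<n} (\<lambda>_. Pow {..<n})"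
    and undecodable: "\<forall>X \<subseteq> {..<3} \<times> {..<n * n} \<times> {..<n * n}. card X \<le> K \<longrightarrow> decode n X \<noteq> R"
    using undecodable_rows_exist[OF n K] by blast
  define A where "A k i = (i \<in> R k)" for k i
  have rows_A: "matrix_rows n A = R"
  proof
    fix k show "matrix_rows n A k = R k"
      using R unfolding matrix_rows_def A_def by (cases "k < n") (auto simp: PiE_iff extensional_def)
  qed
  have "1 \<le> log 2 (real n)" using n by simp
  then have "real n ^ 2 / (8 * log 2 (real n)) \<le> real n ^ 2 / 1"
    by (intro divide_left_mono) auto
  then have K_le: "K \<le> n * n" using K by (simp add: power2_eq_square flip: of_nat_mult)
  have "K < wires n C" if C: "linear_middle n C" "computes n C A" for C
  proof (rule ccontr)
    assume few: "\<not> K < wires n C"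
    then have "n \<le> n * n" "wires n C \<le> n * n" using K_le n by auto
    then obtain X where "X \<subseteq> {..<3} \<times> {..<n * n} \<times> {..<n * n}" "card X \<le> wires n C" "decode n X = R"
      using circuit_code[OF C] rows_A by blast
    then show False using undecodable few by auto
  qed
  then show ?thesis by blast
qed

(* With K = \<lfloor>n^2 / (8 log n)\<rfloor>, every circuit for the hard matrix has > K, hence
   \<ge> n^2 / (8 log n), wires. *)
theorem theorem3:
  shows "\<exists>c::real. c > 0 \<and> (\<forall>n::nat. n \<ge> 2 \<longrightarrow>
           (\<exists>A :: nat \<Rightarrow> nat \<Rightarrow> bool. \<forall>C :: d2circ.
              linear_middle n C \<and> computes n C A \<longrightarrow>
              real (wires n C) \<ge> c * real n ^ 2 / log 2 (real n)))"
proof (intro exI[of _ "1/8"] conjI allI impI)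
  fix n :: nat assume n: "2 \<le> n"
  define y where "y = real n ^ 2 / (8 * log 2 (real n))"
  define K where "K = nat \<lfloor>y\<rfloor>"
  have "0 \<le> y" using n unfolding y_def by simp
  then have "real K \<le> y" "y < real K + 1" unfolding K_def by linarith+
  obtain A where A: "\<forall>C. linear_middle n C \<and> computes n C A \<longrightarrow> K < wires n C"
    using hard_matrix_exists[OF n \<open>real K \<le> y\<close>[unfolded y_def]] by blast
  show "\<exists>A. \<forall>C. linear_middle n C \<and> computes n C A \<longrightarrow> 1/8 * real n ^ 2 / log 2 (real n) \<le> real (wires n C)"
  proof (intro exI[of _ A] allI impI)
    fix C assume "linear_middle n C \<and> computes n C A"
    then have "real K + 1 \<le> real (wires n C)" using A by fastforce
    then show "1/8 * real n ^ 2 / log 2 (real n) \<le> real (wires n C)"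
      using \<open>y < real K + 1\<close> unfolding y_def by simp
  qed
qed simp

end
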